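(* Let $d\ge 2$ and consider the $(2,d)$ random access code task: Alice receives $x=x_1x_2$ with $x_1,x_2\in\{1,\dots,d\}$ uniformly at random ($N=d^2$ inputs); Bob receives $y\in\{1,2\}$ uniformly at random and outputs $z\in\{1,\dots,d\}$; the success metric is $\mathcal{S}=\frac{1}{2d^2}\sum_{x,y}p(z=x_y|x,y)$. Let $\mathcal{S}^*=\frac12\left(1+\frac{1}{\sqrt d}\right)$. There exists a quantum protocol (Alice sends states $\rho_x$, Bob performs measurements $\{M_{z|y}\}_z$, $p(z|x,y)=\operatorname{tr}(\rho_x M_{z|y})$) achieving $\mathcal{S}=\mathcal{S}^*$ whose distinguishability $\mathcal{D}_Q$ satisfies the following: every classical protocol achieving success metric at least $\mathcal{S}^*$ has distinguishability $\mathcal{D}_C$ with $\mathcal{D}_C/\mathcal{D}_Q\ge\sqrt d$. (In particular, $\mathcal{D}_Q\le 1/d$ and every such classical protocol has $\mathcal{D}_C\ge 1/\sqrt d$.)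
   Context: Quantum distinguishability: $\mathcal{D}_Q=\max_{\{M_x\}}\frac1N\sum_x\operatorname{tr}(\rho_xM_x)$ over POVMs $\{M_x\}_{x}$ ($M_x\ge0$, $\sum_xM_x=\mathbb 1$), with the Hilbert space dimension unconstrained. A classical protocol consists of an encoding $p_e(m|x)$ over messages $m$ from a finite set of arbitrary size and a decoding $p_d(z|y,m)$, giving $p(z|x,y)=\sum_m p_e(m|x)p_d(z|y,m)$; its distinguishability is $\mathcal{D}_C=\frac1N\sum_m\max_x p_e(m|x)$. *)

theory Defs
  imports "HOL-Analysis.Analysis"
begin

text \<open>Square complex matrices of dimension n are represented as functions
  nat => nat => complex; only the entries with indices below n matter.\<close>

type_synonym cmat = "nat \<Rightarrow> nat \<Rightarrow> complex"

definition psd :: "nat \<Rightarrow> cmat \<Rightarrow> bool" where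
  "psd n A \<longleftrightarrow> (\<forall>i<n. \<forall>j<n. A i j = cnj (A j i)) \<and>
     (\<forall>v :: nat \<Rightarrow> complex. 0 \<le> Re (\<Sum>i<n. \<Sum>j<n. cnj (v i) * A i j * v j))"

definition mtrace :: "nat \<Rightarrow> cmat \<Rightarrow> complex" where
  "mtrace n A = (\<Sum>i<n. A i i)"

definition mmult :: "nat \<Rightarrow> cmat \<Rightarrow> cmat \<Rightarrow> cmat" where
  "mmult n A B = (\<lambda>i j. \<Sum>k<n. A i k * B k j)"

definition density :: "nat \<Rightarrow> cmat \<Rightarrow> bool" where
  "density n \<rho> \<longleftrightarrow> psd n \<rho> \<and> mtrace n \<rho> = 1"

definition povm :: "nat \<Rightarrow> 'o set \<Rightarrow> ('o \<Rightarrow> cmat) \<Rightarrow> bool" where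
  "povm n I E \<longleftrightarrow> finite I \<and> (\<forall>w\<in>I. psd n (E w)) \<and>
     (\<forall>a<n. \<forall>b<n. (\<Sum>w\<in>I. E w a b) = (if a = b then 1 else 0))"

definition prob :: "nat \<Rightarrow> cmat \<Rightarrow> cmat \<Rightarrow> real" where
  "prob n \<rho> M = Re (mtrace n (mmult n \<rho> M))"

definition inputs :: "nat \<Rightarrow> (nat \<times> nat) set" where
  "inputs d = {1..d} \<times> {1..d}"

definition sel :: "nat \<Rightarrow> nat \<times> nat \<Rightarrow> nat" where
  "sel y x = (if y = 1 then fst x else snd x)"

definition S_star :: "nat \<Rightarrow> real" where
  "S_star d = (1 + 1 / sqrt (real d)) / 2"

definition DQ :: "nat \<Rightarrow> ('x set) \<Rightarrow> ('x \<Rightarrow> cmat) \<Rightarrow> real" where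
  "DQ n X \<rho> = Sup {(1 / real (card X)) * (\<Sum>x\<in>X. prob n (\<rho> x) (E x)) | E. povm n X E}"

definition quantum_protocol :: "nat \<Rightarrow> nat \<Rightarrow> (nat \<times> nat \<Rightarrow> cmat) \<Rightarrow> (nat \<Rightarrow> nat \<Rightarrow> cmat) \<Rightarrow> bool" where
  "quantum_protocol d n \<rho> M \<longleftrightarrow> 0 < n \<and> (\<forall>x\<in>inputs d. density n (\<rho> x)) \<and>
     (\<forall>y\<in>{1,2}. povm n {1..d} (M y))"

definition SQ :: "nat \<Rightarrow> nat \<Rightarrow> (nat \<times> nat \<Rightarrow> cmat) \<Rightarrow> (nat \<Rightarrow> nat \<Rightarrow> cmat) \<Rightarrow> real" where
  "SQ d n \<rho> M = (1 / (2 * real d ^ 2)) *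
     (\<Sum>x\<in>inputs d. \<Sum>y\<in>{1,2}. prob n (\<rho> x) (M y (sel y x)))"

text \<open>Classical protocol with messages m in {0..<K}: encoding pe x m = p_e(m|x),
  decoding pd y m z = p_d(z|y,m).\<close>
definition classical_protocol :: "nat \<Rightarrow> nat \<Rightarrow> (nat \<times> nat \<Rightarrow> nat \<Rightarrow> real) \<Rightarrow> (nat \<Rightarrow> nat \<Rightarrow> nat \<Rightarrow> real) \<Rightarrow> bool" where
  "classical_protocol d K pe pd \<longleftrightarrow>
     (\<forall>x\<in>inputs d. (\<forall>m<K. 0 \<le> pe x m) \<and> (\<Sum>m<K. pe x m) = 1) \<and>
     (\<forall>y\<in>{1,2}. \<forall>m<K. (\<forall>z\<in>{1..d}. 0 \<le> pd y m z) \<and> (\<Sum>z\<in>{1..d}. pd y m z) = 1)"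

definition SC :: "nat \<Rightarrow> nat \<Rightarrow> (nat \<times> nat \<Rightarrow> nat \<Rightarrow> real) \<Rightarrow> (nat \<Rightarrow> nat \<Rightarrow> nat \<Rightarrow> real) \<Rightarrow> real" where
  "SC d K pe pd = (1 / (2 * real d ^ 2)) *
     (\<Sum>x\<in>inputs d. \<Sum>y\<in>{1,2}. \<Sum>m<K. pe x m * pd y m (sel y x))"

definition DC :: "nat \<Rightarrow> nat \<Rightarrow> (nat \<times> nat \<Rightarrow> nat \<Rightarrow> real) \<Rightarrow> real" where
  "DC d K pe = (1 / real (card (inputs d))) * (\<Sum>m<K. Max ((\<lambda>x. pe x m) ` inputs d))"

end

theory Submission
  imports Defs
begin

text \<open>On the quantum side Alice sends, in dimension \<open>d\<close>, the normalised bisector of the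
  standard basis vector \<open>e\<^sub>x\<^sub>1\<close> and the Fourier vector \<open>f\<^sub>x\<^sub>2\<close>; Bob measures in the standard or in
  the Fourier basis. The two bases are mutually unbiased, so each guess succeeds with probability
  \<open>(1 + 1/\<surd>d)/2\<close>. For any distinguishing POVM \<open>{E\<^sub>x}\<close> we have \<open>tr(\<rho>\<^sub>x E\<^sub>x) \<le> tr E\<^sub>x\<close> and
  \<open>\<Sum>\<^sub>x tr E\<^sub>x = d\<close>, hence \<open>D\<^sub>Q \<le> d/d\<^sup>2 = 1/d\<close>.

  On the classical side fix a message \<open>m\<close>. Bob's two decoders are distributions over guesses of
  \<open>x\<^sub>1\<close> and of \<open>x\<^sub>2\<close>, and the best deterministic guesses \<open>(a\<^sub>0, b\<^sub>0)\<close> collect the weight \<open>p\<^sub>e(m|x)\<close>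
  of row \<open>a\<^sub>0\<close> and column \<open>b\<^sub>0\<close>, which is at most \<open>\<Sum>\<^sub>x p\<^sub>e(m|x) + max\<^sub>x p\<^sub>e(m|x)\<close>. Summing over \<open>m\<close>
  gives \<open>2 S\<^sub>C \<le> 1 + D\<^sub>C\<close>, so \<open>S\<^sub>C \<ge> S\<^sup>*\<close> forces \<open>D\<^sub>C \<ge> 1/\<surd>d \<ge> \<surd>d D\<^sub>Q\<close>.\<close>

section \<open>Vectors and positive semidefinite matrices\<close>

definition cinner :: "nat \<Rightarrow> (nat \<Rightarrow> complex) \<Rightarrow> (nat \<Rightarrow> complex) \<Rightarrow> complex" where
  "cinner n u w = (\<Sum>i<n. cnj (u i) * w i)"

definition unit_vec :: "nat \<Rightarrow> nat \<Rightarrow> complex" where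
  "unit_vec a = (\<lambda>k. if k = a then 1 else 0)"

definition proj :: "(nat \<Rightarrow> complex) \<Rightarrow> cmat" where
  "proj u = (\<lambda>i j. u i * cnj (u j))"

definition sesq :: "nat \<Rightarrow> cmat \<Rightarrow> (nat \<Rightarrow> complex) \<Rightarrow> (nat \<Rightarrow> complex) \<Rightarrow> complex" where
  "sesq n A v w = (\<Sum>i<n. \<Sum>j<n. cnj (v i) * A i j * w j)"

lemma sum_mult_unit_vec_right: "i < n \<Longrightarrow> (\<Sum>k<n. f k * unit_vec i k) = f i"
  by (simp add: unit_vec_def if_distrib[where f = "\<lambda>x. _ * x"] cong: if_cong)

lemma sum_mult_unit_vec_left: "i < n \<Longrightarrow> (\<Sum>k<n. unit_vec i k * f k) = f i"
  by (simp add: unit_vec_def if_distrib[where f = "\<lambda>x. x * _"] cong: if_cong)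

lemma cnj_unit_vec [simp]: "cnj (unit_vec i k) = unit_vec i k"
  by (simp add: unit_vec_def)

lemma unit_vec_same [simp]: "unit_vec a a = 1"
  by (simp add: unit_vec_def)

lemma cinner_add_right: "cinner n u (\<lambda>k. v k + w k) = cinner n u v + cinner n u w"
  by (simp add: cinner_def distrib_left sum.distrib)

lemma cinner_add_left: "cinner n (\<lambda>k. v k + w k) u = cinner n v u + cinner n w u"
  by (simp add: cinner_def distrib_right sum.distrib)

lemma cinner_scale_right: "cinner n u (\<lambda>k. c * w k) = c * cinner n u w"
  by (simp add: cinner_def sum_distrib_left mult_ac)

lemma cinner_scale_left: "cinner n (\<lambda>k. c * w k) u = cnj c * cinner n w u"
  by (simp add: cinner_def sum_distrib_left mult_ac)

lemma cinner_unit_vec_left: "a < n \<Longrightarrow> cinner n (unit_vec a) w = w a"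
  by (simp add: cinner_def sum_mult_unit_vec_left)

lemma cinner_unit_vec_right: "a < n \<Longrightarrow> cinner n w (unit_vec a) = cnj (w a)"
  by (simp add: cinner_def sum_mult_unit_vec_right)

lemma Re_cinner_self: "Re (cinner n v v) = (\<Sum>i<n. (cmod (v i))\<^sup>2)"
  unfolding cmod_power2 by (simp add: cinner_def Re_sum power2_eq_square)

lemma sesq_add_left: "sesq n A (\<lambda>k. u k + v k) w = sesq n A u w + sesq n A v w"
  by (simp add: sesq_def distrib_left distrib_right sum.distrib)

lemma sesq_add_right: "sesq n A u (\<lambda>k. v k + w k) = sesq n A u v + sesq n A u w"
  by (simp add: sesq_def distrib_left distrib_right sum.distrib)

lemma sesq_scaled_unit_vecs:
  assumes "i < n" "j < n"
  shows "sesq n A (\<lambda>k. t * unit_vec i k) (\<lambda>k. s * unit_vec j k) = cnj t * A i j * s"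
proof -
  have "sesq n A (\<lambda>k. t * unit_vec i k) (\<lambda>k. s * unit_vec j k)
      = (\<Sum>k<n. unit_vec i k * (\<Sum>l<n. (cnj t * A k l * s) * unit_vec j l))"
    by (simp add: sesq_def sum_distrib_left mult_ac)
  also have "\<dots> = cnj t * A i j * s"
    using assms by (simp add: sum_mult_unit_vec_left sum_mult_unit_vec_right)
  finally show ?thesis .
qed

lemma psd_hermitian: "psd n A \<Longrightarrow> i < n \<Longrightarrow> j < n \<Longrightarrow> A j i = cnj (A i j)"
  unfolding psd_def by (metis complex_cnj_cnj)

lemma psd_sesq_nonneg: "psd n A \<Longrightarrow> 0 \<le> Re (sesq n A v v)"
  unfolding psd_def sesq_def by blast

lemma quadratic_nonneg_imp_le:
  fixes a b K :: real
  assumes "0 \<le> a" "0 \<le> b" "0 \<le> K" "\<And>t. 0 \<le> a * t\<^sup>2 - 2 * t * K + K * b"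
  shows "K \<le> a * b"
proof (cases "a = 0")
  case True
  have "0 \<le> - K * (b + 2)" using assms(4)[of "b + 1"] True by (simp add: algebra_simps)
  with assms(2,3) True show ?thesis by (simp add: mult_le_0_iff)
next
  case False
  with assms(1) have "0 < a" by simp
  have "0 \<le> a * (K / a)\<^sup>2 - 2 * (K / a) * K + K * b" by (rule assms(4))
  also have "\<dots> = K * (a * b - K) / a" using \<open>0 < a\<close> by (simp add: power2_eq_square field_simps)
  finally have "0 \<le> K * (a * b - K)" using \<open>0 < a\<close> by (simp add: zero_le_divide_iff)
  with assms show ?thesis by (cases "K = 0") (auto simp: zero_le_mult_iff)
qed

lemma psd_diag:
  assumes "psd n A" "i < n"
  shows "Im (A i i) = 0" "0 \<le> Re (A i i)"
proof -
  have "A i i = cnj (A i i)" using psd_hermitian[OF assms assms(2)] .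
  then show "Im (A i i) = 0" by (metis cnj.sel(2) neg_equal_zero)
  have "0 \<le> Re (sesq n A (\<lambda>k. 1 * unit_vec i k) (\<lambda>k. 1 * unit_vec i k))"
    using assms(1) by (rule psd_sesq_nonneg)
  then show "0 \<le> Re (A i i)" using assms(2) by (simp only: sesq_scaled_unit_vecs) simp
qed

text \<open>The form at \<open>t e\<^sub>i - cnj (A i j) e\<^sub>j\<close> is a quadratic in the real \<open>t\<close> that is never negative;
  its discriminant gives the bound.\<close>
lemma psd_entry_bound:
  assumes "psd n A" "i < n" "j < n"
  shows "(cmod (A i j))\<^sup>2 \<le> Re (A i i) * Re (A j j)"
proof (rule quadratic_nonneg_imp_le)
  define c where "c = A i j"
  have herm: "A j i = cnj c" unfolding c_def using assms by (rule psd_hermitian)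
  fix t :: real
  let ?u = "\<lambda>k. of_real t * unit_vec i k" and ?w = "\<lambda>k. - cnj c * unit_vec j k"
  have "0 \<le> Re (sesq n A (\<lambda>k. ?u k + ?w k) (\<lambda>k. ?u k + ?w k))"
    using assms(1) by (rule psd_sesq_nonneg)
  also have "\<dots> = Re (cnj (of_real t) * A i i * of_real t + cnj (of_real t) * A i j * (- cnj c)
      + cnj (- cnj c) * A j i * of_real t + cnj (- cnj c) * A j j * (- cnj c))"
    by (simp only: sesq_add_left sesq_add_right sesq_scaled_unit_vecs assms(2,3) add.assoc)
  also have "\<dots> = Re (A i i) * t\<^sup>2 - 2 * t * (cmod (A i j))\<^sup>2 + (cmod (A i j))\<^sup>2 * Re (A j j)"
    using psd_diag(1)[OF assms(1,3)] unfolding cmod_power2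
    by (simp add: herm c_def power2_eq_square algebra_simps)
  finally show "0 \<le> Re (A i i) * t\<^sup>2 - 2 * t * (cmod (A i j))\<^sup>2 + (cmod (A i j))\<^sup>2 * Re (A j j)" .
qed (use psd_diag(2) assms in auto)

lemma psd_entry_norm_le:
  assumes "psd n A" "i < n" "j < n"
  shows "cmod (A i j) \<le> sqrt (Re (A i i)) * sqrt (Re (A j j))"
  using real_sqrt_le_mono[OF psd_entry_bound[OF assms]] by (simp add: real_sqrt_mult)

text \<open>Entrywise bounds \<open>|A i k| \<le> \<surd>A i i \<surd>A k k\<close> followed by Cauchy-Schwarz on the diagonals.\<close>
lemma prob_le_mult_trace:
  assumes "psd n A" "psd n B"
  shows "prob n A B \<le> Re (mtrace n A) * Re (mtrace n B)"
proof -
  define a where "a i = sqrt (Re (A i i))" for i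
  define b where "b i = sqrt (Re (B i i))" for i
  have "prob n A B = Re (\<Sum>i<n. \<Sum>k<n. A i k * B k i)"
    by (simp add: prob_def mtrace_def mmult_def)
  also have "\<dots> \<le> cmod (\<Sum>i<n. \<Sum>k<n. A i k * B k i)"
    by (rule complex_Re_le_cmod)
  also have "\<dots> \<le> (\<Sum>i<n. \<Sum>k<n. cmod (A i k) * cmod (B k i))"
    by (rule order_trans[OF norm_sum]) (simp add: sum_mono norm_sum flip: norm_mult)
  also have "\<dots> \<le> (\<Sum>i<n. \<Sum>k<n. (a i * b i) * (a k * b k))"
  proof (intro sum_mono)
    fix i k assume "i \<in> {..<n}" "k \<in> {..<n}"
    then have "cmod (A i k) \<le> a i * a k" "cmod (B k i) \<le> b k * b i"
      unfolding a_def b_def using assms by (auto intro: psd_entry_norm_le)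
    then have "cmod (A i k) * cmod (B k i) \<le> (a i * a k) * (b k * b i)"
      by (intro mult_mono') auto
    then show "cmod (A i k) * cmod (B k i) \<le> (a i * b i) * (a k * b k)"
      by (simp only: mult_ac)
  qed
  also have "\<dots> = (\<Sum>i<n. a i * b i)\<^sup>2"
    by (simp add: power2_eq_square sum_product)
  also have "\<dots> \<le> (\<Sum>i<n. (a i)\<^sup>2) * (\<Sum>i<n. (b i)\<^sup>2)"
    by (rule Cauchy_Schwarz_ineq_sum)
  also have "\<dots> = Re (mtrace n A) * Re (mtrace n B)"
    using psd_diag(2) assms by (simp add: a_def b_def mtrace_def Re_sum)
  finally show ?thesis .
qed

lemma psd_proj: "psd n (proj u)"
proof -
  have "sesq n (proj u) v v = cinner n v u * cnj (cinner n v u)" for v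
    by (simp add: sesq_def proj_def cinner_def sum_product mult_ac)
  then show ?thesis
    unfolding psd_def sesq_def[symmetric] by (simp add: proj_def complex_mult_cnj)
qed

lemma mtrace_proj: "mtrace n (proj u) = cinner n u u"
  by (simp add: mtrace_def proj_def cinner_def mult_ac)

lemma prob_proj: "prob n (proj u) (proj w) = (cmod (cinner n w u))\<^sup>2"
proof -
  have "mtrace n (mmult n (proj u) (proj w)) = (\<Sum>i<n. \<Sum>k<n. cnj (w i) * u i * (w k * cnj (u k)))"
    by (simp add: mtrace_def mmult_def proj_def mult_ac)
  also have "\<dots> = cinner n w u * cnj (cinner n w u)"
    by (simp add: cinner_def sum_product)
  finally show ?thesis
    by (simp add: prob_def complex_mult_cnj cmod_power2)
qed

lemma povm_proj_basis:
  assumes "\<And>i j. i < n \<Longrightarrow> j < n \<Longrightarrow> (\<Sum>z<n. u z i * cnj (u z j)) = (if i = j then 1 else 0)"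
  shows "povm n {1..n} (\<lambda>z. proj (u (z - 1)))"
  unfolding povm_def
proof (intro conjI ballI allI impI)
  fix i j assume "i < n" "j < n"
  then show "(\<Sum>z\<in>{1..n}. proj (u (z - 1)) i j) = (if i = j then 1 else 0)"
    using assms sum.atLeast1_atMost_eq[of "\<lambda>z. proj (u (z - 1)) i j" n] by (simp add: proj_def)
qed (simp_all add: psd_proj)

section \<open>Bounds on the quantum distinguishability\<close>

definition scalar_mat :: "real \<Rightarrow> cmat" where
  "scalar_mat c i j = of_real c * unit_vec i j"

lemma sesq_scalar_mat: "sesq n (scalar_mat c) v v = of_real c * cinner n v v"
proof -
  have "sesq n (scalar_mat c) v v = (\<Sum>i<n. \<Sum>j<n. (of_real c * cnj (v i) * v j) * unit_vec i j)"
    by (simp add: sesq_def scalar_mat_def mult_ac)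
  also have "\<dots> = (\<Sum>i<n. of_real c * cnj (v i) * v i)"
    by (simp add: sum_mult_unit_vec_right)
  also have "\<dots> = of_real c * cinner n v v"
    by (simp add: cinner_def sum_distrib_left mult_ac)
  finally show ?thesis .
qed

lemma psd_scalar_mat:
  assumes "0 \<le> c"
  shows "psd n (scalar_mat c)"
  unfolding psd_def
  using assms by (simp add: sesq_scalar_mat[unfolded sesq_def] Re_cinner_self sum_nonneg)
    (simp add: scalar_mat_def unit_vec_def)

lemma prob_scalar_mat: "prob n \<rho> (scalar_mat c) = c * Re (mtrace n \<rho>)"
proof -
  have "mtrace n (mmult n \<rho> (scalar_mat c)) = (\<Sum>i<n. \<rho> i i * of_real c)"
    by (simp add: mtrace_def mmult_def scalar_mat_def unit_vec_def if_distrib[where f = "\<lambda>x. _ * x"]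
        cong: if_cong)
  then show ?thesis
    by (simp add: prob_def mtrace_def Re_sum sum_distrib_left mult_ac)
qed

lemma povm_uniform:
  assumes "finite X" "X \<noteq> {}"
  shows "povm n X (\<lambda>_. scalar_mat (1 / real (card X)))"
  using assms by (simp add: povm_def psd_scalar_mat) (simp add: scalar_mat_def unit_vec_def)

lemma povm_sum_trace:
  assumes "povm n X E"
  shows "(\<Sum>x\<in>X. Re (mtrace n (E x))) = real n"
proof -
  have "(\<Sum>x\<in>X. Re (mtrace n (E x))) = (\<Sum>i<n. Re (\<Sum>x\<in>X. E x i i))"
    by (simp add: mtrace_def Re_sum sum.swap[of _ X])
  also have "\<dots> = real n"
    using assms by (simp add: povm_def)
  finally show ?thesis .
qed

lemma sum_prob_le_dim:
  assumes "povm n X E" "\<And>x. x \<in> X \<Longrightarrow> density n (\<rho> x)"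
  shows "(\<Sum>x\<in>X. prob n (\<rho> x) (E x)) \<le> real n"
proof -
  have "(\<Sum>x\<in>X. prob n (\<rho> x) (E x)) \<le> (\<Sum>x\<in>X. Re (mtrace n (\<rho> x)) * Re (mtrace n (E x)))"
    using assms by (intro sum_mono prob_le_mult_trace) (auto simp: density_def povm_def)
  also have "\<dots> = real n"
    using assms by (simp add: density_def povm_sum_trace)
  finally show ?thesis .
qed

text \<open>The lower bound comes from the uniform POVM; it matters because the theorem divides by
  \<open>D\<^sub>Q\<close>.\<close>
lemma DQ_bounds:
  assumes "finite X" "X \<noteq> {}" "\<And>x. x \<in> X \<Longrightarrow> density n (\<rho> x)"
  shows "1 / real (card X) \<le> DQ n X \<rho>" "DQ n X \<rho> \<le> real n / real (card X)"
proof -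
  define V where "V = {(1 / real (card X)) * (\<Sum>x\<in>X. prob n (\<rho> x) (E x)) | E. povm n X E}"
  have V_le: "v \<le> real n / real (card X)" if "v \<in> V" for v
  proof -
    from that obtain E where "povm n X E" "v = (1 / real (card X)) * (\<Sum>x\<in>X. prob n (\<rho> x) (E x))"
      unfolding V_def by blast
    with sum_prob_le_dim[of n X E \<rho>] assms(3) show ?thesis
      by (simp add: divide_right_mono)
  qed
  have "(1 / real (card X)) * (\<Sum>x\<in>X. prob n (\<rho> x) (scalar_mat (1 / real (card X)))) = 1 / real (card X)"
    using assms by (simp add: prob_scalar_mat density_def)
  then have uniform: "1 / real (card X) \<in> V"
    unfolding V_def using povm_uniform[OF assms(1,2)] by force
  show "1 / real (card X) \<le> DQ n X \<rho>"
    unfolding DQ_def V_def[symmetric] using uniform V_le by (intro cSup_upper bdd_aboveI)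
  show "DQ n X \<rho> \<le> real n / real (card X)"
    unfolding DQ_def V_def[symmetric] using uniform V_le by (intro cSup_least) auto
qed

section \<open>Classical protocols\<close>

lemma exists_ge_weighted_average:
  fixes p f :: "'a \<Rightarrow> real"
  assumes "finite A" "\<And>a. a \<in> A \<Longrightarrow> 0 \<le> p a" "sum p A = 1"
  obtains a where "a \<in> A" "(\<Sum>b\<in>A. p b * f b) \<le> f a"
proof -
  have "f ` A \<noteq> {}" using assms(3) by auto
  then obtain a where a: "a \<in> A" "f a = Max (f ` A)"
    using Max_in[of "f ` A"] assms(1) by (metis finite_imageI imageE)
  have "(\<Sum>b\<in>A. p b * f b) \<le> (\<Sum>b\<in>A. p b * f a)"
    unfolding a(2) using assms(1,2) by (intro sum_mono mult_left_mono) auto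
  also have "\<dots> = f a"
    using assms(3) by (simp flip: sum_distrib_right)
  finally show ?thesis using a(1) that by blast
qed

text \<open>Row \<open>a\<^sub>0\<close> and column \<open>b\<^sub>0\<close> overlap only in the entry \<open>(a\<^sub>0, b\<^sub>0)\<close>.\<close>
lemma sum_mult_marginals_le:
  fixes q :: "'a \<times> 'b \<Rightarrow> real"
  assumes "finite A" "finite B" "\<And>x. x \<in> A \<times> B \<Longrightarrow> 0 \<le> q x"
    and "\<And>a. a \<in> A \<Longrightarrow> 0 \<le> p a" "sum p A = 1"
    and "\<And>b. b \<in> B \<Longrightarrow> 0 \<le> r b" "sum r B = 1"
  shows "(\<Sum>x\<in>A \<times> B. q x * (p (fst x) + r (snd x))) \<le> sum q (A \<times> B) + Max (q ` (A \<times> B))"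
proof -
  obtain a0 where a0: "a0 \<in> A" "(\<Sum>a\<in>A. p a * (\<Sum>b\<in>B. q (a, b))) \<le> (\<Sum>b\<in>B. q (a0, b))"
    using exists_ge_weighted_average[of A p "\<lambda>a. \<Sum>b\<in>B. q (a, b)"] assms(1,4,5) by blast
  obtain b0 where b0: "b0 \<in> B" "(\<Sum>b\<in>B. r b * (\<Sum>a\<in>A. q (a, b))) \<le> (\<Sum>a\<in>A. q (a, b0))"
    using exists_ge_weighted_average[of B r "\<lambda>b. \<Sum>a\<in>A. q (a, b)"] assms(2,6,7) by blast
  have "(\<Sum>x\<in>A \<times> B. q x * (p (fst x) + r (snd x)))
      = (\<Sum>a\<in>A. \<Sum>b\<in>B. p a * q (a, b)) + (\<Sum>a\<in>A. \<Sum>b\<in>B. r b * q (a, b))"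
    by (simp add: sum.cartesian_product' distrib_left sum.distrib mult_ac)
  also have "\<dots> = (\<Sum>a\<in>A. p a * (\<Sum>b\<in>B. q (a, b))) + (\<Sum>b\<in>B. r b * (\<Sum>a\<in>A. q (a, b)))"
    by (subst (2) sum.swap) (simp add: sum_distrib_left)
  also have "\<dots> \<le> sum q ({a0} \<times> B) + sum q (A \<times> {b0})"
    using a0(2) b0(2) unfolding sum.cartesian_product' by (simp add: sum.swap[of _ A "{b0}"])
  also have "\<dots> = sum q ({a0} \<times> B \<union> A \<times> {b0}) + sum q ({a0} \<times> B \<inter> A \<times> {b0})"
    using assms(1,2) by (simp add: sum.union_inter)
  also have "\<dots> \<le> sum q (A \<times> B) + q (a0, b0)"
  proof -
    have "{a0} \<times> B \<inter> A \<times> {b0} = {(a0, b0)}" using a0(1) b0(1) by auto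
    moreover have "sum q ({a0} \<times> B \<union> A \<times> {b0}) \<le> sum q (A \<times> B)"
      using a0(1) b0(1) assms(1-3) by (intro sum_mono2) auto
    ultimately show ?thesis by simp
  qed
  also have "\<dots> \<le> sum q (A \<times> B) + Max (q ` (A \<times> B))"
    using a0(1) b0(1) assms(1,2) by simp
  finally show ?thesis .
qed

lemma card_inputs: "card (inputs d) = d * d"
  by (simp add: inputs_def card_cartesian_product)

lemma SC_le_DC:
  assumes "classical_protocol d K pe pd" "1 \<le> d"
  shows "2 * SC d K pe pd \<le> 1 + DC d K pe"
proof -
  have pe: "\<And>x m. x \<in> inputs d \<Longrightarrow> m < K \<Longrightarrow> 0 \<le> pe x m" "\<And>x. x \<in> inputs d \<Longrightarrow> (\<Sum>m<K. pe x m) = 1"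
    and pd: "\<And>y m z. y \<in> {1, 2} \<Longrightarrow> m < K \<Longrightarrow> z \<in> {1..d} \<Longrightarrow> 0 \<le> pd y m z"
      "\<And>y m. y \<in> {1, 2} \<Longrightarrow> m < K \<Longrightarrow> (\<Sum>z\<in>{1..d}. pd y m z) = 1"
    using assms(1) unfolding classical_protocol_def by blast+
  have "(\<Sum>x\<in>inputs d. \<Sum>y\<in>{1, 2}. \<Sum>m<K. pe x m * pd y m (sel y x))
      = (\<Sum>m<K. \<Sum>x\<in>inputs d. pe x m * (pd 1 m (fst x) + pd 2 m (snd x)))"
    by (subst sum.swap) (simp add: sel_def sum.distrib distrib_left)
  also have "\<dots> \<le> (\<Sum>m<K. (\<Sum>x\<in>inputs d. pe x m) + Max ((\<lambda>x. pe x m) ` inputs d))"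
    unfolding inputs_def using pe(1) pd
    by (intro sum_mono sum_mult_marginals_le) (auto simp: inputs_def)
  also have "\<dots> = real (d * d) + (\<Sum>m<K. Max ((\<lambda>x. pe x m) ` inputs d))"
    using pe(2) by (simp add: sum.distrib) (subst sum.swap, simp add: card_inputs)
  finally have "(\<Sum>x\<in>inputs d. \<Sum>y\<in>{1, 2}. \<Sum>m<K. pe x m * pd y m (sel y x))
      \<le> real d * real d * (1 + DC d K pe)"
    using assms(2) by (simp add: DC_def card_inputs algebra_simps)
  then show ?thesis
    using assms(2) by (simp add: SC_def power2_eq_square field_simps)
qed

section \<open>Roots of unity and the Fourier basis\<close>

definition unity_root :: "nat \<Rightarrow> complex" where
  "unity_root d = cis (2 * pi / real d)"

lemma norm_unity_root [simp]: "cmod (unity_root d) = 1"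
  by (simp add: unity_root_def)

lemma cnj_mult_self_unit: "cmod z = 1 \<Longrightarrow> cnj z * z = 1"
  by (metis complex_norm_square mult.commute norm_one of_real_1 power_one complex_mult_cnj)

lemma cnj_unity_root_power_mult [simp]: "cnj (unity_root d) ^ k * unity_root d ^ k = 1"
  by (simp add: cnj_mult_self_unit flip: power_mult_distrib)

lemma unity_root_power_mult_cnj [simp]: "unity_root d ^ k * cnj (unity_root d) ^ k = 1"
  by (simp add: mult.commute[of "unity_root d ^ k"])

lemma unity_root_power: "unity_root d ^ k = cis (2 * pi * real k / real d)"
  unfolding unity_root_def Complex.DeMoivre by (simp add: mult_ac)

lemma unity_root_power_dim: "0 < d \<Longrightarrow> unity_root d ^ d = 1"
  by (simp add: unity_root_power)

lemma unity_root_power_inj: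
  assumes "i < d" "j < d" "unity_root d ^ i = unity_root d ^ j"
  shows "i = j"
  using Complex.bij_betw_roots_unity[of d] assms
  by (auto simp: unity_root_power bij_betw_def inj_on_def)

lemma unity_root_power_pow_dim: "0 < d \<Longrightarrow> (unity_root d ^ i) ^ d = 1"
  by (metis mult.commute power_mult power_one unity_root_power_dim)

lemma sum_unity_root_powers:
  assumes "i < d" "j < d"
  shows "(\<Sum>b<d. unity_root d ^ (b * i) * cnj (unity_root d ^ (b * j))) = (if i = j then of_nat d else 0)"
proof -
  define q where "q = unity_root d ^ i * cnj (unity_root d ^ j)"
  have powers: "unity_root d ^ (b * i) * cnj (unity_root d ^ (b * j)) = q ^ b" for b
    by (simp add: q_def power_mult power_mult_distrib mult.commute[of b])
  have "q = 1 \<longleftrightarrow> i = j"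
  proof
    assume "q = 1"
    have "unity_root d ^ i = q * unity_root d ^ j"
      by (simp add: q_def mult.assoc)
    with \<open>q = 1\<close> show "i = j" using assms unity_root_power_inj by simp
  qed (simp add: q_def)
  moreover have "q ^ d = 1"
    using assms by (simp add: q_def power_mult_distrib unity_root_power_pow_dim flip: complex_cnj_power)
  ultimately show ?thesis
    unfolding powers by (simp add: sum_gp_strict)
qed

definition fourier_vec :: "nat \<Rightarrow> nat \<Rightarrow> nat \<Rightarrow> complex" where
  "fourier_vec d b k = unity_root d ^ (b * k) / of_real (sqrt (real d))"

lemma cinner_fourier_vec_self:
  assumes "0 < d"
  shows "cinner d (fourier_vec d b) (fourier_vec d b) = 1"
proof -
  have "cnj (fourier_vec d b k) * fourier_vec d b k = 1 / of_nat d" for k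
    by (simp add: fourier_vec_def flip: of_real_mult)
  then show ?thesis
    using assms by (simp add: cinner_def)
qed

lemma povm_unit_vecs: "povm d {1..d} (\<lambda>z. proj (unit_vec (z - 1)))"
proof (rule povm_proj_basis)
  fix i j assume "i < d"
  have "(\<Sum>z<d. unit_vec z i * cnj (unit_vec z j)) = (\<Sum>z<d. unit_vec j z * unit_vec i z)"
    by (intro sum.cong) (auto simp: unit_vec_def)
  also have "\<dots> = (if i = j then 1 else 0)"
    using \<open>i < d\<close> by (simp add: sum_mult_unit_vec_right) (simp add: unit_vec_def)
  finally show "(\<Sum>z<d. unit_vec z i * cnj (unit_vec z j)) = (if i = j then 1 else 0)" .
qed

lemma povm_fourier_vecs:
  assumes "0 < d"
  shows "povm d {1..d} (\<lambda>z. proj (fourier_vec d (z - 1)))"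
proof (rule povm_proj_basis)
  fix i j assume "i < d" "j < d"
  then show "(\<Sum>z<d. fourier_vec d z i * cnj (fourier_vec d z j)) = (if i = j then 1 else 0)"
    using sum_unity_root_powers[of i d j] assms
    by (simp add: fourier_vec_def sum_divide_distrib[symmetric] flip: of_real_mult)
qed

section \<open>The quantum protocol\<close>

definition rac_scale :: "nat \<Rightarrow> real" where
  "rac_scale d = 1 / sqrt (2 + 2 / sqrt (real d))"

text \<open>The phase makes the overlaps of \<open>rac_vec d a b\<close> with \<open>e\<^sub>a\<close> and with the Fourier vector \<open>f\<^sub>b\<close>
  both equal to \<open>1 / \<surd>d\<close>, so the state is the normalised bisector of the two.\<close>
definition rac_vec :: "nat \<Rightarrow> nat \<Rightarrow> nat \<Rightarrow> nat \<Rightarrow> complex" where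
  "rac_vec d a b k =
     of_real (rac_scale d) * (unit_vec a k + cnj (unity_root d) ^ (a * b) * fourier_vec d b k)"

lemma rac_scale_squared:
  assumes "0 < d"
  shows "(rac_scale d)\<^sup>2 * (2 + 2 / sqrt (real d)) = 1"
    and "(rac_scale d * (1 + 1 / sqrt (real d)))\<^sup>2 = S_star d"
proof -
  define u where "u = 1 + 1 / sqrt (real d)"
  have "0 < u" using assms by (simp add: u_def add_pos_nonneg)
  have sq: "(rac_scale d)\<^sup>2 = 1 / (2 * u)"
    using \<open>0 < u\<close> by (simp add: rac_scale_def u_def power_divide)
  show "(rac_scale d)\<^sup>2 * (2 + 2 / sqrt (real d)) = 1"
    using \<open>0 < u\<close> by (simp add: sq u_def)
  show "(rac_scale d * (1 + 1 / sqrt (real d)))\<^sup>2 = S_star d"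
    using \<open>0 < u\<close> by (simp add: power_mult_distrib sq S_star_def flip: u_def) (simp add: power2_eq_square)
qed

lemma phase_fourier_vec:
  "cnj (unity_root d) ^ (a * b) * fourier_vec d b a = of_real (1 / sqrt (real d))"
  by (simp add: fourier_vec_def mult.commute[of b] divide_inverse mult.assoc)

lemma cinner_unit_vec_rac_vec:
  assumes "a < d"
  shows "cinner d (unit_vec a) (rac_vec d a b) = of_real (rac_scale d * (1 + 1 / sqrt (real d)))"
  using assms by (simp add: cinner_unit_vec_left rac_vec_def phase_fourier_vec distrib_left)

lemma cinner_fourier_vec_rac_vec:
  assumes "a < d"
  shows "cinner d (fourier_vec d b) (rac_vec d a b)
    = cnj (unity_root d) ^ (a * b) * of_real (rac_scale d * (1 + 1 / sqrt (real d)))"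
proof -
  have "cinner d (fourier_vec d b) (rac_vec d a b) = of_real (rac_scale d) *
      (cnj (fourier_vec d b a) + cnj (unity_root d) ^ (a * b) * cinner d (fourier_vec d b) (fourier_vec d b))"
    unfolding rac_vec_def cinner_scale_right cinner_add_right
    using assms by (simp add: cinner_unit_vec_right)
  also have "\<dots> = of_real (rac_scale d) * (cnj (unity_root d) ^ (a * b) * (1 + of_real (1 / sqrt (real d))))"
    using assms phase_fourier_vec[of d a b]
    by (simp add: cinner_fourier_vec_self fourier_vec_def algebra_simps)
  finally show ?thesis by (simp add: mult_ac)
qed

lemma cinner_rac_vec_self:
  assumes "a < d"
  shows "cinner d (rac_vec d a b) (rac_vec d a b) = 1"
proof -
  let ?\<phi> = "cnj (unity_root d) ^ (a * b)" and ?c = "of_real (rac_scale d) :: complex"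
  have "cinner d (rac_vec d a b) (rac_vec d a b) = cnj ?c * ?c * (1 + ?\<phi> * fourier_vec d b a
      + cnj (?\<phi> * fourier_vec d b a) + cnj ?\<phi> * ?\<phi> * cinner d (fourier_vec d b) (fourier_vec d b))"
    unfolding rac_vec_def cinner_scale_right cinner_add_right cinner_scale_left cinner_add_left
    using assms by (simp add: cinner_unit_vec_left cinner_unit_vec_right algebra_simps)
  also have "\<dots> = of_real ((rac_scale d)\<^sup>2 * (2 + 2 / sqrt (real d)))"
    using assms by (simp add: phase_fourier_vec cinner_fourier_vec_self norm_power power2_eq_square)
  also have "\<dots> = 1"
    using assms by (simp add: rac_scale_squared(1))
  finally show ?thesis .
qed

text \<open>Inputs and outcomes are numbered from 1, vector entries from 0.\<close>
definition rac_state :: "nat \<Rightarrow> nat \<times> nat \<Rightarrow> cmat" where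
  "rac_state d x = proj (rac_vec d (fst x - 1) (snd x - 1))"

definition rac_meas :: "nat \<Rightarrow> nat \<Rightarrow> nat \<Rightarrow> cmat" where
  "rac_meas d y z = proj (if y = 1 then unit_vec (z - 1) else fourier_vec d (z - 1))"

lemma inputs_index_bounds: "x \<in> inputs d \<Longrightarrow> fst x - 1 < d \<and> snd x - 1 < d"
  by (auto simp: inputs_def)

lemma quantum_protocol_rac:
  assumes "0 < d"
  shows "quantum_protocol d d (rac_state d) (rac_meas d)"
  unfolding quantum_protocol_def
proof (intro conjI ballI)
  fix x assume "x \<in> inputs d"
  then show "density d (rac_state d x)"
    using inputs_index_bounds by (simp add: density_def rac_state_def psd_proj mtrace_proj cinner_rac_vec_self)
next
  fix y :: nat assume "y \<in> {1, 2}"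
  then show "povm d {1..d} (rac_meas d y)"
    using povm_unit_vecs povm_fourier_vecs[OF assms] by (auto simp: rac_meas_def[abs_def])
qed (rule assms)

lemma SQ_rac:
  assumes "0 < d"
  shows "SQ d d (rac_state d) (rac_meas d) = S_star d"
proof -
  have "(cmod (cinner d (unit_vec a) (rac_vec d a b)))\<^sup>2 = S_star d"
    and "(cmod (cinner d (fourier_vec d b) (rac_vec d a b)))\<^sup>2 = S_star d" if "a < d" for a b
    using that by (simp_all only: cinner_unit_vec_rac_vec cinner_fourier_vec_rac_vec norm_mult norm_power
        norm_of_real power2_abs complex_mod_cnj norm_unity_root power_one mult_1_left rac_scale_squared(2)[OF assms])
  then have "prob d (rac_state d x) (rac_meas d y (sel y x)) = S_star d" if "x \<in> inputs d" "y \<in> {1, 2}" for x y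
    using that inputs_index_bounds[OF that(1)] by (auto simp: rac_state_def rac_meas_def sel_def prob_proj)
  then have "(\<Sum>x\<in>inputs d. \<Sum>y\<in>{1, 2}. prob d (rac_state d x) (rac_meas d y (sel y x)))
      = real (d * d) * (2 * S_star d)"
    by (simp add: card_inputs)
  then show ?thesis
    using assms by (simp add: SQ_def power2_eq_square)
qed

lemma DQ_rac_bounds:
  assumes "0 < d"
  shows "0 < DQ d (inputs d) (rac_state d)" "DQ d (inputs d) (rac_state d) \<le> 1 / real d"
proof -
  have "\<forall>x\<in>inputs d. density d (rac_state d x)"
    using quantum_protocol_rac[OF assms] by (simp add: quantum_protocol_def)
  then have "1 / real (d * d) \<le> DQ d (inputs d) (rac_state d)"
    and "DQ d (inputs d) (rac_state d) \<le> real d / real (d * d)"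
    using DQ_bounds[of "inputs d" d "rac_state d"] assms by (auto simp: inputs_def card_inputs)
  then show "0 < DQ d (inputs d) (rac_state d)" "DQ d (inputs d) (rac_state d) \<le> 1 / real d"
    using assms by (auto simp: less_le_trans[of 0 "1 / real (d * d)"])
qed

theorem theorem2:
  fixes d :: nat
  assumes "d \<ge> 2"
  shows "\<exists>n \<rho> M. quantum_protocol d n \<rho> M \<and> SQ d n \<rho> M = S_star d \<and>
     (\<forall>K pe pd. classical_protocol d K pe pd \<and> SC d K pe pd \<ge> S_star d \<longrightarrow>
        DC d K pe / DQ n (inputs d) \<rho> \<ge> sqrt (real d))"
proof (intro exI conjI allI impI)
  have "0 < d" using assms by simp
  show "quantum_protocol d d (rac_state d) (rac_meas d)"
    using quantum_protocol_rac[OF \<open>0 < d\<close>] .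
  show "SQ d d (rac_state d) (rac_meas d) = S_star d"
    using SQ_rac[OF \<open>0 < d\<close>] .
  fix K pe pd
  assume "classical_protocol d K pe pd \<and> S_star d \<le> SC d K pe pd"
  then have "1 / sqrt (real d) \<le> DC d K pe"
    using SC_le_DC[of d K pe pd] \<open>0 < d\<close> by (simp add: S_star_def)
  then have "(1 / sqrt (real d)) / (1 / real d) \<le> DC d K pe / DQ d (inputs d) (rac_state d)"
    using DQ_rac_bounds[OF \<open>0 < d\<close>] \<open>0 < d\<close> by (intro frac_le) (auto intro: order_trans[rotated])
  then show "sqrt (real d) \<le> DC d K pe / DQ d (inputs d) (rac_state d)"
    by (simp add: real_div_sqrt)
qed

end
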